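(* There exists an Opt-Lyapunov function for $(X^{\rm in},T)$ if and only if there exist a function $W:\mathbb R^d\to[0,+\infty]$ and a function $\rho:[0,+\infty]\to[0,+\infty]$ such that: (i) $\sup_{x\in X^{\rm in}}W(x)$ is finite and strictly positive; (ii) $W(T(x))\le\rho(W(x))$ for all $x\in\mathbb R^d$; (iii) $\rho(x)=0\iff x=0$ and $\rho(x)=+\infty\iff x=+\infty$; (iv) the restriction of $\rho$ to $\mathbb R_+$ belongs to $\mathcal K$; (v) $\rho(x)<x$ for all $x\in(0,+\infty)$.
   Context: $X^{\rm in}\subseteq\mathbb R^d$, $T:\mathbb R^d\to\mathbb R^d$. $\mathcal K$: continuous strictly increasing $\alpha:\mathbb R_+\to\mathbb R_+$ with $\alpha(0)=0$. An Opt-Lyapunov function for $(X^{\rm in},T)$ is a function $V:\mathbb R^d\to[0,+\infty]$ such that $\sup_{x\in X^{\rm in}}V(x)\in(0,1]$ and there exists $\lambda\in(0,1)$ with $V(T(x))\le\lambda V(x)$ for all $x\in\mathbb R^d$ (convention $\lambda\cdot(+\infty)=+\infty$). *)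

theory Defs
  imports "HOL-Analysis.Analysis" "HOL-Library.Extended_Nonnegative_Real"
begin

definition classK :: "(real \<Rightarrow> real) \<Rightarrow> bool" where
  "classK \<alpha> \<longleftrightarrow> continuous_on {0..} \<alpha> \<and> strict_mono_on {0..} \<alpha> \<and> \<alpha> 0 = 0
     \<and> (\<forall>x\<ge>0. \<alpha> x \<ge> 0)"

text \<open>Opt-Lyapunov function for (Xin, T); values in [0,+oo] are modelled by ennreal,
  and lambda * oo = oo for lambda > 0 holds in ennreal.\<close>

definition is_opt_lyapunov :: "('d \<Rightarrow> ennreal) \<Rightarrow> 'd set \<Rightarrow> ('d \<Rightarrow> 'd) \<Rightarrow> bool" where
  "is_opt_lyapunov V Xin T \<longleftrightarrow>
     (SUP x\<in>Xin. V x) \<in> {0<..1} \<and>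
     (\<exists>l::real. 0 < l \<and> l < 1 \<and> (\<forall>x. V (T x) \<le> ennreal l * V x))"

end

theory Submission
  imports Defs
begin

text \<open>A linear contraction \<open>y \<mapsto> \<lambda> y\<close> turns an Opt-Lyapunov function into a pair \<open>(W, \<rho>)\<close>.
  Conversely, given \<open>(W, \<rho>)\<close>, let \<open>M\<close> be the supremum of \<open>W\<close> on \<open>X\<^sup>i\<^sup>n\<close>. Since \<open>\<rho> y \<le> y\<close> and
  \<open>\<rho>\<close> is monotone, the sublevel set \<open>A = {W \<le> \<rho> M}\<close> is forward invariant and contains
  \<open>T(X\<^sup>i\<^sup>n)\<close>, while \<open>\<rho> M < M\<close> means that \<open>X\<^sup>i\<^sup>n\<close> is not contained in \<open>A\<close>. For any such set
  \<open>A\<close>, the function \<open>V x = sup\<^sub>n 2\<^sup>n [T\<^sup>n x \<notin> A]\<close> is an Opt-Lyapunov function with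
  \<open>\<lambda> = 1/2\<close>: it equals \<open>[x \<notin> A]\<close> on \<open>X\<^sup>i\<^sup>n\<close>, and shifting the orbit halves it.\<close>

definition comparison_function :: "(ennreal \<Rightarrow> ennreal) \<Rightarrow> bool" where
  "comparison_function \<rho> \<longleftrightarrow>
     (\<forall>y. \<rho> y = 0 \<longleftrightarrow> y = 0) \<and>
     (\<forall>y. \<rho> y = \<infinity> \<longleftrightarrow> y = \<infinity>) \<and>
     classK (\<lambda>t. enn2real (\<rho> (ennreal t))) \<and>
     (\<forall>y. 0 < y \<and> y < \<infinity> \<longrightarrow> \<rho> y < y)"

lemma classK_cong:
  assumes "\<And>t. 0 \<le> t \<Longrightarrow> f t = g t"
  shows "classK f \<longleftrightarrow> classK g"
  using assms continuous_on_cong[of "{0..}" "{0..}" f g]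
  unfolding classK_def strict_mono_on_def by auto

lemma classK_scale:
  assumes "0 < l"
  shows "classK (\<lambda>t. l * t)"
  using assms unfolding classK_def strict_mono_on_def
  by (auto intro!: continuous_intros)

lemma ennreal_mult_less_self:
  fixes y :: ennreal
  assumes "l < 1" "0 < y" "y < \<infinity>"
  shows "ennreal l * y < y"
proof -
  obtain r where r: "y = ennreal r" "0 < r"
    using assms(2,3) by (cases y) auto
  show ?thesis
  proof (cases "0 \<le> l")
    case True
    then show ?thesis
      using assms(1) r by (simp add: ennreal_mult''[symmetric] ennreal_less_iff)
  qed (use r in \<open>simp add: ennreal_neg\<close>)
qed

lemma comparison_function_scale:
  assumes "0 < l" "l < 1"
  shows "comparison_function (\<lambda>y. ennreal l * y)"
proof -
  have "classK (\<lambda>t. enn2real (ennreal l * ennreal t))"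
    using classK_scale[OF assms(1)] assms(1)
    by (subst classK_cong[where g = "\<lambda>t. l * t"]) (simp_all add: ennreal_mult''[symmetric])
  then show ?thesis
    using assms ennreal_mult_less_self[of l]
    unfolding comparison_function_def by (auto simp: ennreal_mult_eq_top_iff)
qed

lemma comparison_function_le:
  assumes "comparison_function \<rho>"
  shows "\<rho> y \<le> y"
proof -
  consider "y = 0" | "y = \<infinity>" | "0 < y" "y < \<infinity>"
    unfolding infinity_ennreal_def using less_top[of y] zero_less_iff_neq_zero[of y] by blast
  then show ?thesis
    using assms unfolding comparison_function_def by cases (auto intro: less_imp_le)
qed

lemma classK_ennreal_mono:
  assumes K: "classK (\<lambda>t. enn2real (\<rho> (ennreal t)))"
    and finite: "\<And>y. y < \<infinity> \<Longrightarrow> \<rho> y < \<infinity>"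
    and "a \<le> b" "b < \<infinity>"
  shows "\<rho> a \<le> \<rho> b"
proof -
  have "a < \<infinity>"
    using assms(3,4) by (rule le_less_trans)
  then obtain ra rb where a: "a = ennreal ra" "0 \<le> ra" and b: "b = ennreal rb" "0 \<le> rb"
    using assms(4) unfolding infinity_ennreal_def less_top_ennreal by blast
  have "strict_mono_on {0..} (\<lambda>t. enn2real (\<rho> (ennreal t)))"
    using K unfolding classK_def by blast
  then have "enn2real (\<rho> (ennreal ra)) \<le> enn2real (\<rho> (ennreal rb))"
    by (rule strict_mono_on_leD) (use assms(3) a b in auto)
  then have "enn2real (\<rho> a) \<le> enn2real (\<rho> b)"
    using a b by simp
  moreover have "\<rho> a < top" "\<rho> b < top"
    using finite a b unfolding infinity_ennreal_def by simp_all
  ultimately show ?thesis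
    by (metis ennreal_enn2real ennreal_leI)
qed

lemma comparison_function_mono:
  assumes "comparison_function \<rho>" "a \<le> b" "b < \<infinity>"
  shows "\<rho> a \<le> \<rho> b"
  using assms unfolding comparison_function_def
  by (intro classK_ennreal_mono[of \<rho>]) (auto simp: less_top[symmetric])

definition escape_weight :: "'a set \<Rightarrow> ('a \<Rightarrow> 'a) \<Rightarrow> 'a \<Rightarrow> ennreal" where
  "escape_weight A T x = (SUP n. 2 ^ n * indicator (- A) ((T ^^ n) x))"

lemma escape_weight_step:
  "escape_weight A T (T x) \<le> ennreal (1/2) * escape_weight A T x"
  unfolding escape_weight_def
proof (rule SUP_least)
  fix n
  have half: "ennreal (1/2) * 2 = 1"
    using ennreal_mult''[of 2 "1/2"] by simp
  have "2 ^ n * indicator (- A) ((T ^^ n) (T x))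
      = ennreal (1/2) * (2 ^ Suc n * indicator (- A) ((T ^^ Suc n) x))"
    by (simp only: half power_Suc mult.assoc[symmetric] mult_1 funpow_Suc_right comp_apply)
  also have "\<dots> \<le> ennreal (1/2) * (SUP n. 2 ^ n * indicator (- A) ((T ^^ n) x))"
    by (intro mult_left_mono SUP_upper) auto
  finally show "2 ^ n * indicator (- A) ((T ^^ n) (T x))
      \<le> ennreal (1/2) * (SUP n. 2 ^ n * indicator (- A) ((T ^^ n) x))" .
qed

lemma funpow_in_invariant_set:
  assumes "T ` A \<subseteq> A" "x \<in> A"
  shows "(T ^^ n) x \<in> A"
  using assms by (induction n) auto

lemma escape_weight_eq_indicator:
  assumes "T ` A \<subseteq> A" "T x \<in> A"
  shows "escape_weight A T x = indicator (- A) x"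
  unfolding escape_weight_def
proof (rule antisym)
  show "(SUP n. 2 ^ n * indicator (- A) ((T ^^ n) x)) \<le> (indicator (- A) x :: ennreal)"
  proof (rule SUP_least)
    fix n
    show "2 ^ n * indicator (- A) ((T ^^ n) x) \<le> (indicator (- A) x :: ennreal)"
    proof (cases n)
      case (Suc m)
      then have "(T ^^ n) x \<in> A"
        using funpow_in_invariant_set[OF assms] by (simp only: funpow_Suc_right comp_apply)
      then show ?thesis by simp
    qed simp
  qed
  show "indicator (- A) x \<le> (SUP n. 2 ^ n * indicator (- A) ((T ^^ n) x) :: ennreal)"
    using SUP_upper[of 0 UNIV "\<lambda>n. 2 ^ n * indicator (- A) ((T ^^ n) x) :: ennreal"] by simp
qed

lemma opt_lyapunov_of_invariant_set:
  assumes "T ` A \<subseteq> A" "T ` Xin \<subseteq> A" "\<not> Xin \<subseteq> A"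
  shows "is_opt_lyapunov (escape_weight A T) Xin T"
proof -
  have on_Xin: "escape_weight A T x = indicator (- A) x" if "x \<in> Xin" for x
    using assms(1,2) that by (intro escape_weight_eq_indicator) auto
  obtain x0 where "x0 \<in> Xin" "x0 \<notin> A"
    using assms(3) by blast
  then have "(SUP x\<in>Xin. escape_weight A T x) = 1"
    using on_Xin by (intro antisym SUP_least) (auto simp: indicator_def intro!: SUP_upper2[of x0])
  then show ?thesis
    unfolding is_opt_lyapunov_def using escape_weight_step
    by (auto intro!: exI[of _ "1/2"])
qed

lemma opt_lyapunov_imp_comparison:
  assumes "is_opt_lyapunov V Xin T"
  obtains \<rho> where "(SUP x\<in>Xin. V x) \<noteq> \<infinity>" "(SUP x\<in>Xin. V x) > 0"
    "\<forall>x. V (T x) \<le> \<rho> (V x)" "comparison_function \<rho>"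
proof -
  obtain l where "0 < l" "l < 1" "\<forall>x. V (T x) \<le> ennreal l * V x"
    and sup: "(SUP x\<in>Xin. V x) \<in> {0<..1}"
    using assms unfolding is_opt_lyapunov_def by blast
  moreover have "(SUP x\<in>Xin. V x) \<noteq> \<infinity>"
    using sup ennreal_one_less_top unfolding infinity_ennreal_def
    by (metis greaterThanAtMost_iff leD)
  ultimately show thesis
    using that comparison_function_scale by auto
qed

lemma opt_lyapunov_of_comparison:
  fixes W :: "'a \<Rightarrow> ennreal"
  assumes fin: "(SUP x\<in>Xin. W x) \<noteq> \<infinity>" and pos: "(SUP x\<in>Xin. W x) > 0"
    and step: "\<forall>x. W (T x) \<le> \<rho> (W x)" and \<rho>: "comparison_function \<rho>"
  shows "\<exists>V. is_opt_lyapunov V Xin T"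
proof -
  define M where "M = (SUP x\<in>Xin. W x)"
  define A where "A = {y. W y \<le> \<rho> M}"
  have M_finite: "M < \<infinity>"
    using fin unfolding M_def infinity_ennreal_def less_top .
  have "W (T y) \<le> \<rho> M" if "W y \<le> \<rho> M" for y
    using step comparison_function_le[OF \<rho>, of "W y"] that by (blast intro: order_trans)
  then have invariant: "T ` A \<subseteq> A"
    unfolding A_def by auto
  have "W (T x) \<le> \<rho> M" if "x \<in> Xin" for x
  proof -
    have "W x \<le> M"
      unfolding M_def using that by (rule SUP_upper)
    then show ?thesis
      using step comparison_function_mono[OF \<rho> _ M_finite] by (blast intro: order_trans)
  qed
  then have image: "T ` Xin \<subseteq> A"
    unfolding A_def by auto
  have "\<rho> M < M"
    using \<rho> pos M_finite unfolding comparison_function_def M_def by blast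
  then obtain x0 where "x0 \<in> Xin" "\<rho> M < W x0"
    unfolding M_def by (auto simp: less_SUP_iff)
  then have "\<not> Xin \<subseteq> A"
    unfolding A_def by auto
  then show ?thesis
    using opt_lyapunov_of_invariant_set[OF invariant image] by blast
qed

theorem mainTheorem15:
  fixes Xin :: "(real ^ 'd) set" and T :: "real ^ 'd \<Rightarrow> real ^ 'd"
  shows "(\<exists>V. is_opt_lyapunov V Xin T) \<longleftrightarrow>
    (\<exists>(W :: real ^ 'd \<Rightarrow> ennreal) (\<rho> :: ennreal \<Rightarrow> ennreal).
        (SUP x\<in>Xin. W x) \<noteq> \<infinity> \<and> (SUP x\<in>Xin. W x) > 0 \<and>
        (\<forall>x. W (T x) \<le> \<rho> (W x)) \<and>
        (\<forall>y. \<rho> y = 0 \<longleftrightarrow> y = 0) \<and>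
        (\<forall>y. \<rho> y = \<infinity> \<longleftrightarrow> y = \<infinity>) \<and>
        classK (\<lambda>t. enn2real (\<rho> (ennreal t))) \<and>
        (\<forall>y. 0 < y \<and> y < \<infinity> \<longrightarrow> \<rho> y < y))"
  unfolding comparison_function_def[symmetric]
proof
  assume "\<exists>V. is_opt_lyapunov V Xin T"
  then show "\<exists>W \<rho>. (SUP x\<in>Xin. W x) \<noteq> \<infinity> \<and> (SUP x\<in>Xin. W x) > 0 \<and>
      (\<forall>x. W (T x) \<le> \<rho> (W x)) \<and> comparison_function \<rho>"
    by (metis opt_lyapunov_imp_comparison)
qed (blast intro: opt_lyapunov_of_comparison)

end
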